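(* The linear maps $\mathrm{d}^i_{0,0}:\mathcal{W}\to\mathcal{F}_0\otimes\mathcal{F}_0$ ($i=1,\dots,5$) given for $m,n\in\mathbb{Z}$ by $\mathrm{d}^1_{0,0}(L_m)=v_0\otimes v_m$, $\mathrm{d}^2_{0,0}(L_m)=m\,v_0\otimes v_m$, $\mathrm{d}^3_{0,0}(L_m)=v_m\otimes v_0$, $\mathrm{d}^4_{0,0}(L_m)=m\,v_m\otimes v_0$, and $\mathrm{d}^5_{0,0}(L_0)=v_0\otimes v_0$, $\mathrm{d}^5_{0,0}(L_1)=0$, $\mathrm{d}^5_{0,0}(L_n)=-\sum_{i=1}^{n-1}v_i\otimes v_{n-i}$ for $n\geq2$, $\mathrm{d}^5_{0,0}(L_n)=\sum_{i=n}^{0}v_i\otimes v_{n-i}$ for $n\leq-1$, are 1-cocycles that are not 1-coboundaries, and $\mathrm{d}^1_{0,0},\dots,\mathrm{d}^5_{0,0}$ are linearly independent.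
   Context: The Witt algebra $\mathcal{W}$ has basis $\{L_n\mid n\in\mathbb{Z}\}$ and bracket $[L_m,L_n]=(m-n)L_{m+n}$. $\mathcal{F}_0$ has basis $\{v_n\}$ with $L_m\cdot v_n=-n v_{m+n}$, and $\mathcal{F}_0\otimes\mathcal{F}_0$ is a $\mathcal{W}$-module via $L_m\cdot(v_i\otimes v_j)=-i\,v_{m+i}\otimes v_j-j\,v_i\otimes v_{m+j}$. A 1-cocycle is a linear map $d$ with $d([x,y])=x\cdot d(y)-y\cdot d(x)$; a 1-coboundary is a map $x\mapsto x\cdot v$ for a fixed $v$ in the module. *)

theory Defs
  imports Complex_Main
begin

text \<open>Elements of the Witt algebra W (over the complex numbers): finitely supported
  coefficient functions x, representing the sum over m of x m * L_m.\<close>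
definition witt :: "(int \<Rightarrow> complex) set" where
  "witt = {x. finite {m. x m \<noteq> 0}}"

text \<open>Lie bracket [L_m, L_n] = (m - n) L_(m+n), extended bilinearly.\<close>
definition wbracket :: "(int \<Rightarrow> complex) \<Rightarrow> (int \<Rightarrow> complex) \<Rightarrow> (int \<Rightarrow> complex)" where
  "wbracket x y = (\<lambda>k. \<Sum>m\<in>{m. x m \<noteq> 0}. of_int (m - (k - m)) * x m * y (k - m))"

text \<open>Elements of F_0 tensor F_0: finitely supported coefficient functions f,
  representing the sum over (i,j) of f (i,j) * v_i \<otimes> v_j.\<close>
type_synonym tens = "int \<times> int \<Rightarrow> complex"

definition tens_mod :: "tens set" where
  "tens_mod = {f. finite {p. f p \<noteq> 0}}"

definition vt :: "int \<Rightarrow> int \<Rightarrow> tens" where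
  "vt i j = (\<lambda>p. if p = (i, j) then 1 else 0)"

text \<open>Action of the basis element L_m:
  L_m (v_i \<otimes> v_j) = -i v_(m+i) \<otimes> v_j - j v_i \<otimes> v_(m+j), extended linearly.\<close>
definition act :: "int \<Rightarrow> tens \<Rightarrow> tens" where
  "act m f = (\<lambda>(a, b). - of_int (a - m) * f (a - m, b) - of_int (b - m) * f (a, b - m))"

definition wact :: "(int \<Rightarrow> complex) \<Rightarrow> tens \<Rightarrow> tens" where
  "wact x f = (\<lambda>p. \<Sum>m\<in>{m. x m \<noteq> 0}. x m * act m f p)"

definition lin_ext :: "(int \<Rightarrow> tens) \<Rightarrow> (int \<Rightarrow> complex) \<Rightarrow> tens" where
  "lin_ext D x = (\<lambda>p. \<Sum>m\<in>{m. x m \<noteq> 0}. x m * D m p)"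

definition is_cocycle :: "((int \<Rightarrow> complex) \<Rightarrow> tens) \<Rightarrow> bool" where
  "is_cocycle d \<longleftrightarrow> (\<forall>x\<in>witt. \<forall>y\<in>witt.
      d (wbracket x y) = (\<lambda>p. wact x (d y) p - wact y (d x) p))"

definition is_coboundary :: "((int \<Rightarrow> complex) \<Rightarrow> tens) \<Rightarrow> bool" where
  "is_coboundary d \<longleftrightarrow> (\<exists>v\<in>tens_mod. \<forall>x\<in>witt. d x = wact x v)"

definition dval :: "nat \<Rightarrow> int \<Rightarrow> tens" where
  "dval i m =
    (if i = 1 then vt 0 m
     else if i = 2 then (\<lambda>p. of_int m * vt 0 m p)
     else if i = 3 then vt m 0
     else if i = 4 then (\<lambda>p. of_int m * vt m 0 p)
     else if m = 0 then vt 0 0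
     else if m = 1 then (\<lambda>p. 0)
     else if m \<ge> 2 then (\<lambda>p. - (\<Sum>k\<in>{1..m-1}. vt k (m - k) p))
     else (\<lambda>p. \<Sum>k\<in>{m..0}. vt k (m - k) p))"

definition d00 :: "nat \<Rightarrow> (int \<Rightarrow> complex) \<Rightarrow> tens" where
  "d00 i = lin_ext (dval i)"

end

theory Submission
  imports Defs
begin

text \<open>
  A linear map on W is a 1-cocycle as soon as the cocycle identity holds on pairs of basis
  elements L_m, L_n. For d^1, ..., d^4 this is a direct computation with
  L_m (v_i \<otimes> v_j) = -i v_(m+i) \<otimes> v_j - j v_i \<otimes> v_(m+j); and d^5 - d^1 is the formal coboundary
  of the infinite sum \<Sum>_(a<0) (1/a) v_a \<otimes> v_(-a), so d^5 is a cocycle as well.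
  None of them is a coboundary: the v_0 \<otimes> v_0 coefficient of L_0 \<cdot> v always vanishes, which rules
  out d^1, d^3, d^5, while d^2 = (x \<mapsto> x \<cdot> v) would force v to have coefficient 1 at every
  v_(-m) \<otimes> v_m with m \<noteq> 0, contradicting finite support (d^4 is symmetric). Linear independence
  follows by reading off five coefficients of the images of L_0, L_1, L_2.
\<close>

lemma lin_ext_eq_sum:
  assumes "finite A" and "{m. x m \<noteq> 0} \<subseteq> A"
  shows "lin_ext D x p = (\<Sum>m\<in>A. x m * D m p)"
  unfolding lin_ext_def by (rule sum.mono_neutral_left) (use assms in auto)

lemma wact_eq_lin_ext: "wact x f = lin_ext (\<lambda>m. act m f) x"
  by (simp add: wact_def lin_ext_def)

lemma wbracket_eq_sum:
  assumes "finite I" and "{m. x m \<noteq> 0} \<subseteq> I"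
  shows "wbracket x y k = (\<Sum>m\<in>I. of_int (m - (k - m)) * x m * y (k - m))"
  unfolding wbracket_def by (rule sum.mono_neutral_left) (use assms in auto)

lemma wbracket_support:
  assumes I: "finite I" and x: "{m. x m \<noteq> 0} \<subseteq> I" and y: "{n. y n \<noteq> 0} \<subseteq> I"
  shows "{k. wbracket x y k \<noteq> 0} \<subseteq> (\<lambda>(m, n). m + n) ` (I \<times> I)"
proof
  fix k assume "k \<in> {k. wbracket x y k \<noteq> 0}"
  then have "(\<Sum>m\<in>I. of_int (m - (k - m)) * x m * y (k - m)) \<noteq> 0"
    by (simp add: wbracket_eq_sum[OF I x])
  then obtain m where "m \<in> I" and "of_int (m - (k - m)) * x m * y (k - m) \<noteq> 0"
    by (blast dest: sum.not_neutral_contains_not_neutral)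
  with y have "(m, k - m) \<in> I \<times> I" by auto
  then show "k \<in> (\<lambda>(m, n). m + n) ` (I \<times> I)" by (rule rev_image_eqI) simp
qed

lemma lin_ext_wbracket:
  assumes I: "finite I" and x: "{m. x m \<noteq> 0} \<subseteq> I" and y: "{n. y n \<noteq> 0} \<subseteq> I"
  shows "lin_ext D (wbracket x y) p = (\<Sum>m\<in>I. \<Sum>n\<in>I. x m * y n * (of_int (m - n) * D (m + n) p))"
proof -
  define J where "J = (\<lambda>(m, n). m + n) ` (I \<times> I)"
  have J: "finite J" using I by (simp add: J_def)
  have "lin_ext D (wbracket x y) p = (\<Sum>k\<in>J. wbracket x y k * D k p)"
    using wbracket_support[OF I x y] unfolding J_def[symmetric] by (rule lin_ext_eq_sum[OF J])
  also have "\<dots> = (\<Sum>m\<in>I. \<Sum>k\<in>J. of_int (m - (k - m)) * x m * y (k - m) * D k p)"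
    unfolding wbracket_eq_sum[OF I x] sum_distrib_right by (rule sum.swap)
  also have "\<dots> = (\<Sum>m\<in>I. \<Sum>n\<in>I. x m * y n * (of_int (m - n) * D (m + n) p))"
  proof (rule sum.cong[OF refl])
    fix m assume m: "m \<in> I"
    have "(\<Sum>k\<in>J. of_int (m - (k - m)) * x m * y (k - m) * D k p)
        = (\<Sum>k\<in>(+) m ` I. of_int (m - (k - m)) * x m * y (k - m) * D k p)"
    proof (rule sum.mono_neutral_right[OF J])
      show "(+) m ` I \<subseteq> J" using m unfolding J_def by auto
      have "y (k - m) = 0" if "k \<notin> (+) m ` I" for k
      proof -
        have "k - m \<notin> I" using that by (metis diff_add_cancel image_eqI add.commute)
        then show ?thesis using y by blast
      qed
      then show "\<forall>k\<in>J - (+) m ` I. of_int (m - (k - m)) * x m * y (k - m) * D k p = 0" by simp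
    qed
    also have "\<dots> = (\<Sum>n\<in>I. x m * y n * (of_int (m - n) * D (m + n) p))"
      by (simp add: sum.reindex ac_simps)
    finally show "(\<Sum>k\<in>J. of_int (m - (k - m)) * x m * y (k - m) * D k p)
        = (\<Sum>n\<in>I. x m * y n * (of_int (m - n) * D (m + n) p))" .
  qed
  finally show ?thesis .
qed

lemma act_sum: "act m (\<lambda>q. \<Sum>n\<in>I. y n * D n q) p = (\<Sum>n\<in>I. y n * act m (D n) p)"
  by (cases p) (simp add: act_def sum_distrib_left sum_subtractf sum.distrib algebra_simps)

lemma act_commutator: "act m (act n f) p - act n (act m f) p = of_int (m - n) * act (m + n) f p"
proof (cases p)
  case (Pair a b)
  have "a - n - m = a - m - n" and "b - n - m = b - m - n" by simp_all
  then show ?thesis unfolding Pair act_def by (simp add: algebra_simps)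
qed

lemma act_add: "act m (\<lambda>q. f q + g q) p = act m f p + act m g p"
  by (cases p) (simp add: act_def algebra_simps)

lemma act_scaleC: "act m (\<lambda>q. c * f q) p = c * act m f p"
  by (cases p) (simp add: act_def algebra_simps)

lemma act_vt: "act m (vt i j) p = - of_int i * vt (m + i) j p - of_int j * vt i (m + j) p"
  by (cases p) (auto simp: act_def vt_def)

definition basis_cocycle :: "(int \<Rightarrow> tens) \<Rightarrow> bool" where
  "basis_cocycle D \<longleftrightarrow> (\<forall>m n p. of_int (m - n) * D (m + n) p = act m (D n) p - act n (D m) p)"

lemma is_cocycle_lin_ext:
  assumes "basis_cocycle D"
  shows "is_cocycle (lin_ext D)"
  unfolding is_cocycle_def
proof (intro ballI ext)
  fix x y p assume "x \<in> witt" "y \<in> witt"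
  define I where "I = {m. x m \<noteq> 0} \<union> {m. y m \<noteq> 0}"
  have I: "finite I" using \<open>x \<in> witt\<close> \<open>y \<in> witt\<close> by (simp add: I_def witt_def)
  have x: "{m. x m \<noteq> 0} \<subseteq> I" and y: "{m. y m \<noteq> 0} \<subseteq> I" by (auto simp: I_def)
  have wact: "wact z (lin_ext D w) p = (\<Sum>m\<in>I. \<Sum>n\<in>I. z m * w n * act m (D n) p)"
    if z: "{m. z m \<noteq> 0} \<subseteq> I" and w: "{m. w m \<noteq> 0} \<subseteq> I" for z w
  proof -
    have lw: "lin_ext D w = (\<lambda>q. \<Sum>n\<in>I. w n * D n q)"
      using lin_ext_eq_sum[OF I w] by blast
    show ?thesis
      unfolding wact_eq_lin_ext lin_ext_eq_sum[OF I z] lw act_sum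
      by (simp add: sum_distrib_left mult.assoc)
  qed
  have "lin_ext D (wbracket x y) p = (\<Sum>m\<in>I. \<Sum>n\<in>I. x m * y n * (of_int (m - n) * D (m + n) p))"
    by (rule lin_ext_wbracket[OF I x y])
  also have "\<dots> = (\<Sum>m\<in>I. \<Sum>n\<in>I. x m * y n * act m (D n) p)
                 - (\<Sum>m\<in>I. \<Sum>n\<in>I. x m * y n * act n (D m) p)"
    unfolding assms[unfolded basis_cocycle_def, rule_format]
    by (simp add: right_diff_distrib sum_subtractf)
  also have "\<dots> = wact x (lin_ext D y) p - wact y (lin_ext D x) p"
    unfolding wact[OF x y] wact[OF y x] by (subst (2) sum.swap) (simp add: ac_simps)
  finally show "lin_ext D (wbracket x y) p = wact x (lin_ext D y) p - wact y (lin_ext D x) p" .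
qed

lemma basis_cocycle_act: "basis_cocycle (\<lambda>m. act m f)"
  unfolding basis_cocycle_def by (simp add: act_commutator)

lemma basis_cocycle_add:
  assumes "basis_cocycle D" and "basis_cocycle E"
  shows "basis_cocycle (\<lambda>m p. D m p + E m p)"
  unfolding basis_cocycle_def act_add distrib_left
  by (simp only: assms[unfolded basis_cocycle_def, rule_format]) (simp add: algebra_simps)

definition dval5_potential :: tens where
  "dval5_potential = (\<lambda>(a, b). if a + b = 0 \<and> a < 0 then 1 / of_int a else 0)"

lemma act_dval5_potential:
  "act n dval5_potential (a, b) =
     (if a + b = n \<and> a < 0 then 1 else 0) - (if a + b = n \<and> a < n then 1 else 0)"
proof -
  have left: "- of_int (a - n) * dval5_potential (a - n, b) = - (if a + b = n \<and> a < n then 1 else 0)"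
    by (auto simp: dval5_potential_def simp del: of_int_diff)
  have right: "of_int (b - n) * dval5_potential (a, b - n) = - (if a + b = n \<and> a < 0 then 1 else 0)"
  proof (cases "a + b = n \<and> a < 0")
    case True
    then have "of_int (b - n) = - (of_int a :: complex)" and "a \<noteq> 0" by auto
    with True show ?thesis by (simp add: dval5_potential_def del: of_int_diff)
  qed (auto simp: dval5_potential_def simp del: of_int_diff)
  show ?thesis unfolding act_def by (simp only: split left right) simp
qed

lemma sum_vt_antidiagonal:
  assumes "finite A"
  shows "(\<Sum>k\<in>A. vt k (n - k) (a, b)) = (if a + b = n \<and> a \<in> A then 1 else 0)"
proof -
  have "(\<Sum>k\<in>A. vt k (n - k) (a, b)) = (\<Sum>k\<in>A. if a = k then (if a + b = n then 1 else 0) else 0)"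
    by (intro sum.cong) (auto simp: vt_def)
  also have "\<dots> = (if a + b = n \<and> a \<in> A then 1 else 0)"
    using assms by simp
  finally show ?thesis .
qed

lemma dval5_eq: "dval 5 n p = act n dval5_potential p + vt 0 n p"
proof (cases p)
  case (Pair a b)
  have v: "vt 0 n (a, b) = (if a = 0 \<and> b = n then 1 else 0)" by (simp add: vt_def)
  consider "n = 0" | "n = 1" | "n \<ge> 2" | "n \<le> -1" by linarith
  then show ?thesis
  proof cases
    case 1 then show ?thesis unfolding Pair act_dval5_potential v by (simp add: dval_def vt_def)
  next
    case 2 then show ?thesis unfolding Pair act_dval5_potential v by (simp add: dval_def)
  next
    case 3
    then have "dval 5 n (a, b) = - (if a + b = n \<and> a \<in> {1..n-1} then 1 else 0)"
      by (simp add: dval_def sum_vt_antidiagonal)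
    with 3 show ?thesis unfolding Pair act_dval5_potential v by auto
  next
    case 4
    then have "dval 5 n (a, b) = (if a + b = n \<and> a \<in> {n..0} then 1 else 0)"
      by (simp add: dval_def sum_vt_antidiagonal)
    with 4 show ?thesis unfolding Pair act_dval5_potential v by auto
  qed
qed

lemma basis_cocycle_dval1: "basis_cocycle (dval 1)"
  unfolding basis_cocycle_def dval_def by (simp add: act_vt add.commute[of n] algebra_simps)

lemma basis_cocycle_dval2: "basis_cocycle (dval 2)"
  unfolding basis_cocycle_def dval_def by (simp add: act_scaleC act_vt add.commute[of n] algebra_simps)

lemma basis_cocycle_dval3: "basis_cocycle (dval 3)"
  unfolding basis_cocycle_def dval_def by (simp add: act_vt add.commute[of n] algebra_simps)

lemma basis_cocycle_dval4: "basis_cocycle (dval 4)"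
  unfolding basis_cocycle_def dval_def by (simp add: act_scaleC act_vt add.commute[of n] algebra_simps)

lemma basis_cocycle_dval5: "basis_cocycle (dval 5)"
proof -
  have "dval 5 = (\<lambda>m p. act m dval5_potential p + dval 1 m p)"
    by (simp add: fun_eq_iff dval5_eq) (simp add: dval_def)
  then show ?thesis by (simp only:) (intro basis_cocycle_add basis_cocycle_act basis_cocycle_dval1)
qed

lemma basis_cocycle_dval: "i \<in> {1..5} \<Longrightarrow> basis_cocycle (dval i)"
  using basis_cocycle_dval1 basis_cocycle_dval2 basis_cocycle_dval3 basis_cocycle_dval4
    basis_cocycle_dval5
  by (auto simp: numeral_eq_Suc le_Suc_eq)

definition witt_basis :: "int \<Rightarrow> int \<Rightarrow> complex" where
  "witt_basis m = (\<lambda>k. if k = m then 1 else 0)"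

lemma witt_basis_in_witt: "witt_basis m \<in> witt"
  by (simp add: witt_def witt_basis_def)

lemma lin_ext_witt_basis: "lin_ext D (witt_basis m) = D m"
  by (rule ext) (simp add: lin_ext_eq_sum[of "{m}"] witt_basis_def)

lemma coboundary_on_witt_basis:
  assumes "is_coboundary (lin_ext D)"
  obtains v where "v \<in> tens_mod" and "\<And>m. D m = act m v"
  using assms unfolding is_coboundary_def
  by (metis witt_basis_in_witt lin_ext_witt_basis wact_eq_lin_ext)

lemma tens_mod_vanishes_along:
  assumes "v \<in> tens_mod" and "inj g"
  obtains m :: int where "m \<noteq> 0" and "v (g m) = 0"
proof -
  have "finite (g -` {p. v p \<noteq> 0})"
    using assms by (intro finite_vimageI) (simp_all add: tens_mod_def)
  then have "finite (insert 0 {m. v (g m) \<noteq> 0})" by (simp add: vimage_def)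
  then obtain m where "m \<notin> insert 0 {m. v (g m) \<noteq> 0}"
    using ex_new_if_finite[OF infinite_UNIV_int] by blast
  then show ?thesis using that by blast
qed

lemma not_coboundary_dval: "i \<in> {1..5} \<Longrightarrow> \<not> is_coboundary (d00 i)"
proof
  assume i: "i \<in> {1..5}" and cob: "is_coboundary (d00 i)"
  obtain v where v: "v \<in> tens_mod" and dv: "\<And>m. dval i m = act m v"
    using cob unfolding d00_def by (elim coboundary_on_witt_basis) blast
  from i consider "i \<in> {1, 3, 5}" | "i = 2" | "i = 4" by fastforce
  then show False
  proof cases
    case 1
    have "act 0 v (0, 0) = 0" by (simp add: act_def)
    moreover have "dval i 0 (0, 0) = 1" using 1 by (auto simp: dval_def vt_def)
    ultimately show False using dv by simp
  next
    case 2
    obtain m where "m \<noteq> 0" and "v (- m, m) = 0"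
      using v by (rule tens_mod_vanishes_along[where g = "\<lambda>m. (- m, m)"]) (auto simp: inj_def)
    then have "act m v (0, m) \<noteq> dval i m (0, m)" using 2 by (simp add: act_def dval_def vt_def)
    then show False using dv by simp
  next
    case 3
    obtain m where "m \<noteq> 0" and "v (m, - m) = 0"
      using v by (rule tens_mod_vanishes_along[where g = "\<lambda>m. (m, - m)"]) (auto simp: inj_def)
    then have "act m v (m, 0) \<noteq> dval i m (m, 0)" using 3 by (simp add: act_def dval_def vt_def)
    then show False using dv by simp
  qed
qed

lemma dval_linearly_independent:
  assumes "\<And>m p. (\<Sum>i=1..5. c i * dval i m p) = 0"
  shows "\<forall>i\<in>{1..5::nat}. c i = 0"
proof -
  have eval: "c 1 * dval 1 m p + c 2 * dval 2 m p + c 3 * dval 3 m p + c 4 * dval 4 m p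
      + c 5 * dval 5 m p = 0" for m p
    using assms[of m p] by (simp add: numeral_eq_Suc)
  have "c 1 + c 3 + c 5 = 0" using eval[of 0 "(0, 0)"] by (simp add: dval_def vt_def)
  moreover have "c 1 + c 2 = 0" using eval[of 1 "(0, 1)"] by (simp add: dval_def vt_def)
  moreover have "c 3 + c 4 = 0" using eval[of 1 "(1, 0)"] by (simp add: dval_def vt_def)
  moreover have "c 1 + 2 * c 2 = 0" using eval[of 2 "(0, 2)"] by (simp add: dval_def vt_def mult.commute)
  moreover have "c 3 + 2 * c 4 = 0" using eval[of 2 "(2, 0)"] by (simp add: dval_def vt_def mult.commute)
  ultimately have "c 1 = 0 \<and> c 2 = 0 \<and> c 3 = 0 \<and> c 4 = 0 \<and> c 5 = 0"
    by (auto simp: algebra_simps eq_neg_iff_add_eq_0[symmetric])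
  then show ?thesis by (auto simp: numeral_eq_Suc le_Suc_eq)
qed

theorem propositionP3p0:
  shows "(\<forall>i\<in>{1..5::nat}. is_cocycle (d00 i) \<and> \<not> is_coboundary (d00 i))
    \<and> (\<forall>c :: nat \<Rightarrow> complex.
          (\<forall>x\<in>witt. \<forall>p. (\<Sum>i=1..5. c i * d00 i x p) = 0)
          \<longrightarrow> (\<forall>i\<in>{1..5::nat}. c i = 0))"
proof (intro conjI allI impI)
  show "\<forall>i\<in>{1..5::nat}. is_cocycle (d00 i) \<and> \<not> is_coboundary (d00 i)"
    using basis_cocycle_dval not_coboundary_dval unfolding d00_def by (blast intro: is_cocycle_lin_ext)
next
  fix c :: "nat \<Rightarrow> complex"
  assume "\<forall>x\<in>witt. \<forall>p. (\<Sum>i=1..5. c i * d00 i x p) = 0"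
  then have "(\<Sum>i=1..5. c i * d00 i (witt_basis m) p) = 0" for m p
    using witt_basis_in_witt by blast
  then have "(\<Sum>i=1..5. c i * dval i m p) = 0" for m p
    by (simp add: d00_def lin_ext_witt_basis)
  then show "\<forall>i\<in>{1..5::nat}. c i = 0" by (rule dval_linearly_independent)
qed

end
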